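(* Let $r,s$ be real numbers with $s > 3\sqrt{3}\, r > 0$, and let $C_{r,s} \subset \mathbb{P}^2$ be the nonsingular projective cubic $s(xyz - r^2 z^3) = x^2 y + x y^2$, with the group law on its real points in which the identity is $[1,-1,0]$ and $P+Q$ is the reflection in the line $y=x$ of the third intersection point of $C_{r,s}$ with the line through $P$ and $Q$ (tangent line if $P=Q$). Then no affine point $(x,y)$ of $C_{r,s}$ with $x>0$ and $y>0$ has finite odd order in this group.
   Context: Points $(x,y)$ on $C_{r,s}$ with $x>0,y>0$ are called triangle points. *)

theory Defs
  imports Complex_Main
begin

text \<open>Points of the real projective plane are represented by nonzero triples
  (homogeneous coordinates); two triples represent the same point iff they are
  proportional by a nonzero factor.\<close>

type_synonym pt = "real \<times> real \<times> real"

definition proj_eq :: "pt \<Rightarrow> pt \<Rightarrow> bool" where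
  "proj_eq P Q \<longleftrightarrow> P \<noteq> (0,0,0) \<and> (\<exists>c::real. c \<noteq> 0 \<and>
      Q = (c * fst P, c * fst (snd P), c * snd (snd P)))"

definition lc :: "real \<Rightarrow> pt \<Rightarrow> real \<Rightarrow> pt \<Rightarrow> pt" where
  "lc a U b V = (a * fst U + b * fst V,
                 a * fst (snd U) + b * fst (snd V),
                 a * snd (snd U) + b * snd (snd V))"

definition Fc :: "real \<Rightarrow> real \<Rightarrow> pt \<Rightarrow> real" where
  "Fc r s P = (case P of (x, y, z) \<Rightarrow> s * (x*y*z - r^2 * z^3) - (x^2 * y + x * y^2))"

definition on_curve :: "real \<Rightarrow> real \<Rightarrow> pt \<Rightarrow> bool" where
  "on_curve r s P \<longleftrightarrow> P \<noteq> (0,0,0) \<and> Fc r s P = 0"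

text \<open>R is the third intersection point of C_{r,s} with the line through P and Q
  (tangent line if P = Q): there is a line, parametrised by
  (\<lambda>,\<mu>) \<mapsto> \<lambda>U + \<mu>V with U, V linearly independent, containing P, Q, R such that
  the restriction of the cubic form to the line is a nonzero multiple of the
  product of the three linear forms vanishing at the parameters of P, Q, R;
  i.e. the intersection of the line with the curve is P + Q + R counted with
  multiplicity.\<close>
definition third_pt :: "real \<Rightarrow> real \<Rightarrow> pt \<Rightarrow> pt \<Rightarrow> pt \<Rightarrow> bool" where
  "third_pt r s P Q R \<longleftrightarrow>
     on_curve r s P \<and> on_curve r s Q \<and> on_curve r s R \<and>
     (\<exists>U V p1 p2 q1 q2 r1 r2 k.
        (\<forall>a b. lc a U b V = (0,0,0) \<longrightarrow> a = 0 \<and> b = 0) \<and>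
        P = lc p1 U p2 V \<and> Q = lc q1 U q2 V \<and> R = lc r1 U r2 V \<and> k \<noteq> 0 \<and>
        (\<forall>la mu. Fc r s (lc la U mu V) =
            k * (p2*la - p1*mu) * (q2*la - q1*mu) * (r2*la - r1*mu)))"

definition swap_xy :: "pt \<Rightarrow> pt" where
  "swap_xy P = (case P of (x, y, z) \<Rightarrow> (y, x, z))"

definition cadd :: "real \<Rightarrow> real \<Rightarrow> pt \<Rightarrow> pt \<Rightarrow> pt" where
  "cadd r s P Q = swap_xy (SOME R. third_pt r s P Q R)"

definition O_pt :: pt where
  "O_pt = (1, -1, 0)"

fun cmult :: "real \<Rightarrow> real \<Rightarrow> nat \<Rightarrow> pt \<Rightarrow> pt" where
  "cmult r s 0 P = O_pt"
| "cmult r s (Suc n) P = cadd r s P (cmult r s n P)"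

definition has_finite_order :: "real \<Rightarrow> real \<Rightarrow> pt \<Rightarrow> bool" where
  "has_finite_order r s P \<longleftrightarrow> (\<exists>n>0. proj_eq (cmult r s n P) O_pt)"

definition point_order :: "real \<Rightarrow> real \<Rightarrow> pt \<Rightarrow> nat" where
  "point_order r s P = (LEAST n. n > 0 \<and> proj_eq (cmult r s n P) O_pt)"

end

theory Submission
  imports Defs
begin

text \<open>
  The lines through \<open>O = [1,-1,0]\<close> are \<open>x + y = c z\<close>. For \<open>c = s\<close> the line is the inflectional
  tangent at \<open>O\<close>, and for the three roots \<open>u0 < 0 < u1 < u2\<close> of \<open>c\<^sup>2 (s - c) = 4 s r\<^sup>2\<close> it is
  tangent to the curve at \<open>(c/2, c/2, 1)\<close>. So \<open>(x + y - c z) / (x + y - s z)\<close> has divisor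
  \<open>2 T - 2 O\<close>, and the sign of \<open>(x + y - c z)(x + y - s z)\<close> is multiplicative along the chords
  of the curve: on three collinear points its product is the restriction of the cubic form to
  the two points where the chord meets the two lines, which is a square up to a positive factor.
  For \<open>c = u0\<close> or \<open>c = u1\<close> this sign is negative exactly at the triangle points, so if \<open>P\<close> is
  a triangle point then exactly one of \<open>Q\<close> and the third point on the chord \<open>PQ\<close> is one.
  The reflection in \<open>y = x\<close> preserves triangle points, hence \<open>k P\<close> is a triangle point iff \<open>k\<close>
  is odd; but \<open>m P = O\<close> is not a triangle point. Chords through a point of tangency are handled
  by switching between \<open>u0\<close> and \<open>u1\<close>, or directly when they are the diagonal.
\<close>

section \<open>Lines in the projective plane\<close>

lemma lc_1_0 [simp]: "lc 1 P 0 Q = P"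
  and lc_0_1 [simp]: "lc 0 P 1 Q = Q"
  by (cases P; cases Q; simp add: lc_def)+

lemma lc_lc: "lc a (lc a1 U b1 V) b (lc a2 U b2 V) = lc (a*a1 + b*a2) U (a*b1 + b*b2) V"
  by (cases U; cases V) (simp add: lc_def algebra_simps)

definition indep :: "pt \<Rightarrow> pt \<Rightarrow> bool" where
  "indep U V \<longleftrightarrow> (\<forall>a b. lc a U b V = (0,0,0) \<longrightarrow> a = 0 \<and> b = 0)"

definition det3 :: "pt \<Rightarrow> pt \<Rightarrow> pt \<Rightarrow> real" where
  "det3 P Q R = (case P of (a1, a2, a3) \<Rightarrow> case Q of (b1, b2, b3) \<Rightarrow> case R of (c1, c2, c3) \<Rightarrow>
     a1*(b2*c3 - b3*c2) - a2*(b1*c3 - b3*c1) + a3*(b1*c2 - b2*c1))"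

lemma det3_lc: "det3 (lc p1 U p2 V) (lc q1 U q2 V) (lc c1 U c2 V) = 0"
  by (cases U; cases V) (simp add: lc_def det3_def algebra_simps)

lemma indep_at_infinity_spans:
  assumes "indep (u1, u2, 0) (v1, v2, 0)"
  shows "\<exists>a b. lc a (u1, u2, 0) b (v1, v2, 0) = (x, y, 0)"
proof -
  have indep: "a = 0 \<and> b = 0" if "lc a (u1, u2, 0) b (v1, v2, 0) = (0,0,0)" for a b
    using assms that unfolding indep_def by blast
  define d where "d = u1*v2 - u2*v1"
  have "d \<noteq> 0"
  proof
    assume "d = 0"
    then have "lc v2 (u1, u2, 0) (-u2) (v1, v2, 0) = (0,0,0)" "lc v1 (u1, u2, 0) (-u1) (v1, v2, 0) = (0,0,0)"
      unfolding d_def by (simp_all add: lc_def algebra_simps)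
    then have "u1 = 0" "u2 = 0"
      using indep by (metis neg_equal_0_iff_equal)+
    then have "lc 1 (u1, u2, 0) 0 (v1, v2, 0) = (0,0,0)"
      by (simp add: lc_def)
    then show False
      using indep[of 1 0] by simp
  qed
  moreover have "(x*v2 - y*v1)*u1 + (y*u1 - x*u2)*v1 = x*d" "(x*v2 - y*v1)*u2 + (y*u1 - x*u2)*v2 = y*d"
    unfolding d_def by (simp_all add: algebra_simps)
  ultimately have "((x*v2 - y*v1)/d)*u1 + ((y*u1 - x*u2)/d)*v1 = x"
    "((x*v2 - y*v1)/d)*u2 + ((y*u1 - x*u2)/d)*v2 = y"
    by (simp_all only: times_divide_eq_left add_divide_distrib[symmetric]) simp_all
  then have "lc ((x*v2 - y*v1)/d) (u1, u2, 0) ((y*u1 - x*u2)/d) (v1, v2, 0) = (x, y, 0)"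
    unfolding lc_def by simp
  then show ?thesis by blast
qed

section \<open>The cubic form on a line\<close>

(* polar r s U V is the derivative of the cubic form at U in the direction V. *)
definition polar :: "real \<Rightarrow> real \<Rightarrow> pt \<Rightarrow> pt \<Rightarrow> real" where
  "polar r s U V = (case U of (x, y, z) \<Rightarrow> case V of (a, b, c) \<Rightarrow>
      y*(s*z - 2*x - y)*a + x*(s*z - x - 2*y)*b + (s*x*y - 3*s*r^2*z^2)*c)"

lemma Fc_lc:
  "Fc r s (lc la U mu V) =
     la^3 * Fc r s U + la^2*mu * polar r s U V + la*mu^2 * polar r s V U + mu^3 * Fc r s V"
  by (cases U; cases V)
    (simp add: lc_def Fc_def polar_def algebra_simps power2_eq_square power3_eq_cube)

lemma Fc_euler: "polar r s U U = 3 * Fc r s U"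
  by (cases U) (simp add: Fc_def polar_def algebra_simps power2_eq_square power3_eq_cube)

lemma Fc_nonsingular:
  fixes r s x y z :: real
  assumes "r > 0" "s > 0" "s^2 > 27*r^2"
    and "y*(s*z - 2*x - y) = 0" "x*(s*z - x - 2*y) = 0" "s*x*y - 3*s*r^2*z^2 = 0"
  shows "x = 0 \<and> y = 0 \<and> z = 0"
proof (cases "x = 0 \<or> y = 0")
  case True
  then show ?thesis using assms by auto
next
  case False
  then have "s*z = 2*x + y" "s*z = x + 2*y"
    using assms(4,5) by simp_all
  then have xy: "y = x" and sz: "s*z = 3*x" by simp_all
  have "x*x = 3*r^2*z^2"
    using assms(2,6) xy by (simp add: power2_eq_square algebra_simps)
  then have "s^2*(x*x) = 3*r^2*(s*z)^2"
    by (simp add: power2_eq_square algebra_simps)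
  then have "(s^2 - 27*r^2)*(x*x) = 0"
    unfolding sz by (simp add: power2_eq_square algebra_simps)
  with assms(3) False show ?thesis by simp
qed

lemma exists_indep_in_kernel:
  fixes gx gy gz x y z :: real
  assumes "(gx, gy, gz) \<noteq> (0,0,0)" "(x, y, z) \<noteq> (0,0,0)" "gx*x + gy*y + gz*z = 0"
  shows "\<exists>a b c. indep (x, y, z) (a, b, c) \<and> gx*a + gy*b + gz*c = 0"
proof -
  define a b c where "a = gy*z - gz*y" and "b = gz*x - gx*z" and "c = gx*y - gy*x"
  have "a^2 + b^2 + c^2 = (gx^2 + gy^2 + gz^2)*(x^2 + y^2 + z^2) - (gx*x + gy*y + gz*z)^2"
    unfolding a_def b_def c_def by (simp add: algebra_simps power2_eq_square)
  moreover have "gx^2 + gy^2 + gz^2 > 0" and xyz: "x^2 + y^2 + z^2 > 0"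
    using assms(1,2)
    by (smt (verit) not_sum_power2_lt_zero sum_power2_gt_zero_iff zero_le_power2 prod.inject)+
  ultimately have "a^2 + b^2 + c^2 > 0"
    using assms(3) by simp
  then have abc: "(a, b, c) \<noteq> (0,0,0)" by auto
  have "indep (x, y, z) (a, b, c)"
    unfolding indep_def
  proof (intro allI impI)
    fix k l assume "lc k (x, y, z) l (a, b, c) = (0,0,0)"
    then have comps: "k*x + l*a = 0" "k*y + l*b = 0" "k*z + l*c = 0"
      by (simp_all add: lc_def)
    have "k*(x^2 + y^2 + z^2) = x*(k*x + l*a) + y*(k*y + l*b) + z*(k*z + l*c)"
      unfolding a_def b_def c_def by (simp add: algebra_simps power2_eq_square)
    with comps xyz have "k = 0" by simp
    with comps abc show "k = 0 \<and> l = 0" by auto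
  qed
  moreover have "gx*a + gy*b + gz*c = 0"
    unfolding a_def b_def c_def by (simp add: algebra_simps)
  ultimately show ?thesis by blast
qed

lemma tangent_direction_exists:
  assumes "r > 0" "s > 0" "s^2 > 27*r^2" "on_curve r s P"
  shows "\<exists>V. indep P V \<and> polar r s P V = 0"
proof -
  obtain x y z where P: "P = (x, y, z)" by (cases P)
  define gx gy gz where "gx = y*(s*z - 2*x - y)" and "gy = x*(s*z - x - 2*y)"
    and "gz = s*x*y - 3*s*r^2*z^2"
  have polar_P: "polar r s P (a, b, c) = gx*a + gy*b + gz*c" for a b c
    unfolding P gx_def gy_def gz_def polar_def by simp
  have "(gx, gy, gz) \<noteq> (0,0,0)"
  proof
    assume "(gx, gy, gz) = (0,0,0)"
    then have "y*(s*z - 2*x - y) = 0" "x*(s*z - x - 2*y) = 0" "s*x*y - 3*s*r^2*z^2 = 0"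
      unfolding gx_def gy_def gz_def by simp_all
    then have "x = 0 \<and> y = 0 \<and> z = 0"
      by (rule Fc_nonsingular[OF assms(1-3)])
    with assms(4) show False by (simp add: P on_curve_def)
  qed
  moreover have "gx*x + gy*y + gz*z = 0"
    using Fc_euler[of r s P] polar_P[of x y z] assms(4) by (simp add: P on_curve_def)
  moreover have "(x, y, z) \<noteq> (0,0,0)"
    using assms(4) by (simp add: P on_curve_def)
  ultimately obtain a b c where "indep P (a, b, c)" "gx*a + gy*b + gz*c = 0"
    using exists_indep_in_kernel[of gx gy gz x y z] unfolding P by blast
  then show ?thesis
    by (intro exI[of _ "(a, b, c)"]) (simp add: polar_P)
qed

lemma no_affine_line_on_curve:
  assumes "r > 0" "s > 0" "(w1, w2) \<noteq> (0,0)"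
    and line: "\<And>la mu. Fc r s (la*y1 + mu*w1, la*y2 + mu*w2, la) = 0"
  shows False
proof -
  define c2 where "c2 = s*w1*w2 - (w1*w2*(y1 + y2) + (y1*w2 + y2*w1)*(w1 + w2))"
  have "Fc r s (y1 + w1, y2 + w2, 1) + Fc r s (y1 - w1, y2 - w2, 1) - 2*Fc r s (y1, y2, 1) = 2*c2"
    unfolding c2_def by (simp add: Fc_def algebra_simps power2_eq_square power3_eq_cube)
  then have c2: "c2 = 0"
    using line[of 1 1] line[of 1 "-1"] line[of 1 0] by simp
  have at_infinity: "w1*w2*(w1 + w2) = 0"
    using line[of 0 1] by (simp add: Fc_def algebra_simps power2_eq_square)
  have affine: "s*(y1*y2 - r^2) - y1*y2*(y1 + y2) = 0"
    using line[of 1 0] by (simp add: Fc_def algebra_simps power2_eq_square)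
  have "s*r^2 \<noteq> 0" using assms(1,2) by simp
  consider "w1 = 0" | "w2 = 0" | "w2 = -w1"
    using at_infinity by auto
  then show False
  proof cases
    case 1
    with assms(3) c2 have "y1 = 0" by (simp add: c2_def algebra_simps)
    with affine \<open>s*r^2 \<noteq> 0\<close> show False by simp
  next
    case 2
    with assms(3) c2 have "y2 = 0" by (simp add: c2_def algebra_simps)
    with affine \<open>s*r^2 \<noteq> 0\<close> show False by simp
  next
    case 3
    with assms(3) have "w1 \<noteq> 0" by auto
    moreover have "w1*w1*(s - (y1 + y2)) = 0"
      using c2 3 by (simp add: c2_def algebra_simps)
    ultimately have "y1 + y2 = s" by simp
    with affine \<open>s*r^2 \<noteq> 0\<close> show False by (simp add: algebra_simps)
  qed
qed

lemma curve_contains_no_line: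
  assumes "r > 0" "s > 0" "indep U V" and line: "\<And>la mu. Fc r s (lc la U mu V) = 0"
  shows False
proof -
  obtain u1 u2 u3 where U: "U = (u1, u2, u3)" by (cases U)
  obtain v1 v2 v3 where V: "V = (v1, v2, v3)" by (cases V)
  have indep: "a = 0 \<and> b = 0" if "lc a U b V = (0,0,0)" for a b
    using assms(3) that unfolding indep_def by blast
  show False
  proof (cases "u3 = 0 \<and> v3 = 0")
    case True
    then obtain a b where "lc a U b V = (1, 1, 0)"
      using indep_at_infinity_spans[of u1 u2 v1 v2] assms(3) unfolding U V by blast
    then have "Fc r s (1, 1, 0) = 0"
      using line by metis
    then show False by (simp add: Fc_def)
  next
    case False
    obtain a1 b1 where "a1*u3 + b1*v3 = 1"
      using False by (metis divide_self_if mult_zero_left add.right_neutral add_0 nonzero_divide_eq_eq)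
    define Y W where "Y = lc a1 U b1 V" and "W = lc v3 U (-u3) V"
    obtain y1 y2 w1 w2 where Y: "Y = (y1, y2, 1)" and W: "W = (w1, w2, 0)"
      using \<open>a1*u3 + b1*v3 = 1\<close> unfolding Y_def W_def U V by (simp add: lc_def)
    have "(w1, w2) \<noteq> (0,0)"
      using indep[of v3 "-u3"] False W unfolding W_def by auto
    moreover have "Fc r s (la*y1 + mu*w1, la*y2 + mu*w2, la) = 0" for la mu
      using line[of "la*a1 + mu*v3" "la*b1 - mu*u3"] lc_lc[of la a1 U b1 V mu v3 "-u3"]
      unfolding Y_def[symmetric] W_def[symmetric] Y W by (simp add: lc_def)
    ultimately show False
      using no_affine_line_on_curve[OF assms(1,2)] by blast
  qed
qed

lemma third_pt_of_factorization:
  assumes indep: "indep U V" and "k \<noteq> 0"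
    and factors: "\<And>la mu. Fc r s (lc la U mu V) = k*(p2*la - p1*mu)*(q2*la - q1*mu)*(c2*la - c1*mu)"
    and "(p1, p2) \<noteq> (0,0)" "(q1, q2) \<noteq> (0,0)" "(c1, c2) \<noteq> (0,0)"
  shows "third_pt r s (lc p1 U p2 V) (lc q1 U q2 V) (lc c1 U c2 V)"
proof -
  have on_curve: "on_curve r s (lc a U b V)" if "(a, b) \<noteq> (0,0)"
    and "(p2*a - p1*b)*(q2*a - q1*b)*(c2*a - c1*b) = 0" for a b
    using indep that factors[of a b] unfolding on_curve_def indep_def by auto
  have "on_curve r s (lc p1 U p2 V)" "on_curve r s (lc q1 U q2 V)" "on_curve r s (lc c1 U c2 V)"
    using on_curve[of p1 p2] on_curve[of q1 q2] on_curve[of c1 c2] assms(4-6)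
    by (simp_all add: algebra_simps)
  then show ?thesis
    unfolding third_pt_def using indep \<open>k \<noteq> 0\<close> factors unfolding indep_def by blast
qed

lemma third_pt_secant:
  assumes "r > 0" "s > 0" "indep P Q" "on_curve r s P" "on_curve r s Q"
  shows "\<exists>R. third_pt r s P Q R"
proof -
  define B C where "B = polar r s P Q" and "C = polar r s Q P"
  have restriction: "Fc r s (lc la P mu Q) = la^2*mu*B + la*mu^2*C" for la mu
    using assms(4,5) unfolding B_def C_def on_curve_def by (simp add: Fc_lc)
  have "(C, B) \<noteq> (0,0)"
    using curve_contains_no_line[OF assms(1-3)] restriction by auto
  then have "third_pt r s (lc 1 P 0 Q) (lc 0 P 1 Q) (lc (-C) P B Q)"
    using restriction
    by (intro third_pt_of_factorization[OF assms(3), of "-1"])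
      (auto simp: algebra_simps power2_eq_square)
  then show ?thesis by (metis lc_1_0 lc_0_1)
qed

lemma third_pt_tangent:
  assumes "r > 0" "s > 0" "indep P V" "on_curve r s P" "polar r s P V = 0" "c \<noteq> 0"
  shows "\<exists>R. third_pt r s P (lc c P 0 V) R"
proof -
  define B D where "B = polar r s V P" and "D = Fc r s V"
  have restriction: "Fc r s (lc la P mu V) = la*mu^2*B + mu^3*D" for la mu
    using assms(4,5) unfolding B_def D_def on_curve_def by (simp add: Fc_lc)
  have "(D, B) \<noteq> (0,0)"
    using curve_contains_no_line[OF assms(1-3)] restriction by auto
  then have "third_pt r s (lc 1 P 0 V) (lc c P 0 V) (lc (-D) P B V)"
    using restriction assms(6)
    by (intro third_pt_of_factorization[OF assms(3), of "1/c"])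
      (auto simp: algebra_simps power2_eq_square power3_eq_cube)
  then show ?thesis by (metis lc_1_0)
qed

lemma third_pt_exists:
  assumes "r > 0" "s > 0" "s^2 > 27*r^2" "on_curve r s P" "on_curve r s Q"
  shows "\<exists>R. third_pt r s P Q R"
proof (cases "indep P Q")
  case True
  then show ?thesis using third_pt_secant assms by blast
next
  case False
  then obtain a b where ab: "lc a P b Q = (0,0,0)" "(a, b) \<noteq> (0,0)"
    unfolding indep_def by blast
  obtain V where V: "indep P V" "polar r s P V = 0"
    using tangent_direction_exists[OF assms(1-4)] by blast
  have "b \<noteq> 0"
    using ab V(1) unfolding indep_def by (metis lc_lc lc_1_0 mult_zero_right add_0 mult_1_right)
  define c where "c = -a/b"
  have "Q = lc c P 0 V"
    using ab(1) \<open>b \<noteq> 0\<close> unfolding c_def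
    by (cases P; cases Q; cases V) (auto simp: lc_def field_simps)
  moreover have "c \<noteq> 0"
    using assms(5) calculation unfolding on_curve_def by (auto simp: lc_def)
  ultimately show ?thesis
    using third_pt_tangent[OF assms(1,2) V(1) assms(4) V(2)] by blast
qed

lemma third_pt_swap:
  assumes "third_pt r s P Q R"
  shows "third_pt r s P R Q"
proof -
  obtain U V p1 p2 q1 q2 c1 c2 k where
    "\<forall>a b. lc a U b V = (0,0,0) \<longrightarrow> a = 0 \<and> b = 0"
    "P = lc p1 U p2 V" "Q = lc q1 U q2 V" "R = lc c1 U c2 V" "k \<noteq> 0"
    "\<forall>la mu. Fc r s (lc la U mu V) = k*(p2*la - p1*mu)*(q2*la - q1*mu)*(c2*la - c1*mu)"
    using assms unfolding third_pt_def by blast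
  moreover have "k*(p2*la - p1*mu)*(q2*la - q1*mu)*(c2*la - c1*mu) =
      k*(p2*la - p1*mu)*(c2*la - c1*mu)*(q2*la - q1*mu)" for la mu
    by (simp add: algebra_simps)
  ultimately show ?thesis
    using assms unfolding third_pt_def by metis
qed

lemma third_pt_collinear: "third_pt r s P Q R \<Longrightarrow> det3 P Q R = 0"
  unfolding third_pt_def by (auto simp: det3_lc)

lemma third_pt_tangent_eq:
  assumes "third_pt r s P Q R" "proj_eq Q R"
  shows "Fc r s (lc 1 Q 1 P) = Fc r s (lc 1 Q (-1) P)"
proof -
  obtain U V p1 p2 q1 q2 c1 c2 k where
    indep: "\<forall>a b. lc a U b V = (0,0,0) \<longrightarrow> a = 0 \<and> b = 0" and
    h: "P = lc p1 U p2 V" "Q = lc q1 U q2 V" "R = lc c1 U c2 V" and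
    factors: "\<forall>la mu. Fc r s (lc la U mu V) = k*(p2*la - p1*mu)*(q2*la - q1*mu)*(c2*la - c1*mu)"
    using assms(1) unfolding third_pt_def by blast
  obtain c where "R = (c*fst Q, c*fst (snd Q), c*snd (snd Q))"
    using assms(2) unfolding proj_eq_def by blast
  then have "lc (c1 - c*q1) U (c2 - c*q2) V = (0,0,0)"
    using h by (cases U; cases V) (simp add: lc_def algebra_simps)
  with indep have "c1 - c*q1 = 0 \<and> c2 - c*q2 = 0" by blast
  then have c: "c1 = c*q1" "c2 = c*q2" by simp_all
  have "Fc r s (lc 1 Q 1 P) = k*(p2*(q1 + p1) - p1*(q2 + p2))*(q2*(q1 + p1) - q1*(q2 + p2))*
      (c2*(q1 + p1) - c1*(q2 + p2))"
    using factors unfolding h lc_lc by simp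
  also have "\<dots> = k*(p2*(q1 - p1) - p1*(q2 - p2))*(q2*(q1 - p1) - q1*(q2 - p2))*
      (c2*(q1 - p1) - c1*(q2 - p2))"
    unfolding c by (simp add: algebra_simps)
  also have "\<dots> = Fc r s (lc 1 Q (-1) P)"
    using factors unfolding h lc_lc by simp
  finally show ?thesis .
qed

section \<open>Lines through O and triangle points\<close>

definition triangle :: "pt \<Rightarrow> bool" where
  "triangle X = (case X of (x, y, z) \<Rightarrow> x*z > 0 \<and> y*z > 0)"

definition is_O :: "pt \<Rightarrow> bool" where
  "is_O X = (case X of (x, y, z) \<Rightarrow> x \<noteq> 0 \<and> y = -x \<and> z = 0)"

definition ell :: "real \<Rightarrow> pt \<Rightarrow> real" where
  "ell c X = (case X of (x, y, z) \<Rightarrow> x + y - c*z)"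

lemma ell_lc: "ell c (lc a U b V) = a * ell c U + b * ell c V"
  by (cases U; cases V) (simp add: ell_def lc_def algebra_simps)

lemma not_triangle_if_proj_eq_O: "proj_eq X O_pt \<Longrightarrow> \<not> triangle X"
  by (cases X) (auto simp: proj_eq_def O_pt_def triangle_def)

lemma not_triangle_if_is_O: "is_O X \<Longrightarrow> \<not> triangle X"
  by (cases X) (auto simp: is_O_def triangle_def)

lemma triangle_swap_xy [simp]: "triangle (swap_xy X) = triangle X"
  by (cases X) (auto simp: swap_xy_def triangle_def)

lemma on_curve_swap_xy [simp]: "on_curve r s (swap_xy X) = on_curve r s X"
  by (cases X) (auto simp: swap_xy_def on_curve_def Fc_def algebra_simps)

lemma Fc_on_line_through_O:
  "x + y = t*z \<Longrightarrow> Fc r s (x, y, z) = z*(x*y*(s - t) - s*r^2*z^2)"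
proof -
  assume "x + y = t*z"
  moreover have "x^2*y + x*y^2 = x*y*(x + y)" by (simp add: algebra_simps power2_eq_square)
  ultimately show ?thesis by (simp add: Fc_def algebra_simps power2_eq_square power3_eq_cube)
qed

lemma Fc_on_ell_s_zero: "ell s (x, y, z) = 0 \<Longrightarrow> Fc r s (x, y, z) = -s*r^2*z^3"
  using Fc_on_line_through_O[of x y s z r] by (simp add: ell_def power3_eq_cube power2_eq_square)

lemma Fc_on_tangent_line:
  assumes "ell c (x, y, z) = 0" "c^2*(s - c) = 4*s*r^2"
  shows "Fc r s (x, y, z) = -(s - c)*z*(x - c*z/2)^2"
proof -
  have y: "y = c*z - x" using assms(1) by (simp add: ell_def)
  have "4*Fc r s (x, y, z) = -(s - c)*z*(4*(x - c*z/2)^2) + z^3*(c^2*(s - c) - 4*s*r^2)"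
    unfolding y by (simp add: Fc_def algebra_simps power2_eq_square power3_eq_cube)
  then show ?thesis using assms(2) by simp
qed

lemma triangle_iff_slope:
  assumes "r > 0" "s > 0" "Fc r s (x, y, z) = 0" "z \<noteq> 0" "x + y = t*z"
  shows "triangle (x, y, z) \<longleftrightarrow> 0 < t \<and> t < s"
proof -
  have xy: "x*y*(s - t) = s*r^2*z^2"
    using Fc_on_line_through_O[OF assms(5), of r s] assms(3,4) by simp
  have "s*r^2*z^2 > 0" using assms(1,2,4) by simp
  with xy have "x*y \<noteq> 0" by auto
  have "x*z + y*z = (x + y)*z" "(x*z)*(y*z) = (x*y)*z^2"
    by (simp_all add: algebra_simps power2_eq_square)
  then have sum: "x*z + y*z = t*z^2" and prod: "(x*z)*(y*z) = (x*y)*z^2"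
    using assms(5) by (simp_all add: power2_eq_square)
  have "z^2 > 0" using assms(4) by simp
  show ?thesis
  proof
    assume "triangle (x, y, z)"
    then have "x*z > 0" "y*z > 0" by (simp_all add: triangle_def)
    then have "t*z^2 > 0" "(x*y)*z^2 > 0"
      using sum prod[symmetric] by (simp, simp only: mult_pos_pos)
    with \<open>z^2 > 0\<close> have "t > 0" "x*y > 0"
      by (simp_all add: zero_less_mult_iff)
    moreover have "(x*y)*(s - t) > 0"
      using xy \<open>s*r^2*z^2 > 0\<close> by simp
    ultimately have "s - t > 0"
      using zero_less_mult_pos by blast
    with \<open>t > 0\<close> show "0 < t \<and> t < s" by simp
  next
    assume t: "0 < t \<and> t < s"
    have "(x*y)*(s - t) > 0"
      using xy \<open>s*r^2*z^2 > 0\<close> by simp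
    with t have "x*y > 0"
      using zero_less_mult_pos2 diff_gt_0_iff_gt by blast
    then have "(x*z)*(y*z) > 0"
      unfolding prod using \<open>z^2 > 0\<close> by (rule mult_pos_pos)
    moreover have "x*z + y*z > 0"
      unfolding sum using t \<open>z^2 > 0\<close> by simp
    ultimately show "triangle (x, y, z)"
      by (auto simp: triangle_def zero_less_mult_iff)
  qed
qed

lemma triangle_diagonal_iff:
  assumes "q \<noteq> 0"
  shows "triangle (a*q, a*q, q) \<longleftrightarrow> a > 0"
proof -
  have "q*q > 0" using assms by (metis not_real_square_gt_zero)
  then show ?thesis
    by (auto simp: triangle_def mult.assoc intro: mult_pos_pos dest: zero_less_mult_pos2)
qed

lemma ell_s_ne_zero:
  assumes "r > 0" "s > 0" "on_curve r s X" "\<not> is_O X"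
  shows "ell s X \<noteq> 0"
proof
  obtain x y z where X: "X = (x, y, z)" by (cases X)
  assume "ell s X = 0"
  moreover from this have "z = 0"
    using Fc_on_ell_s_zero[of s x y z r] assms(1-3) by (simp add: X on_curve_def)
  ultimately show False
    using assms(3,4) by (auto simp: X on_curve_def is_O_def ell_def)
qed

lemma triangle_iff_if_collinear_with_O:
  assumes "r > 0" "s > 0" "on_curve r s A" "on_curve r s B" "\<not> is_O A" "\<not> is_O B"
    and "det3 A B O_pt = 0"
  shows "triangle A \<longleftrightarrow> triangle B"
proof -
  obtain a1 a2 a3 where A: "A = (a1, a2, a3)" by (cases A)
  obtain b1 b2 b3 where B: "B = (b1, b2, b3)" by (cases B)
  have det: "(a1 + a2)*b3 = (b1 + b2)*a3"
    using assms(7) by (simp add: A B det3_def O_pt_def algebra_simps)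
  show ?thesis
  proof (cases "a3 = 0 \<or> b3 = 0")
    case True
    with det assms(3-6) have "a3 = 0 \<and> b3 = 0"
      by (auto simp: A B on_curve_def is_O_def)
    then show ?thesis by (simp add: A B triangle_def)
  next
    case False
    define t where "t = (a1 + a2)/a3"
    have "a1 + a2 = t*a3" "b1 + b2 = t*b3"
      using False det by (simp_all add: t_def field_simps)
    then show ?thesis
      using triangle_iff_slope[OF assms(1,2)] assms(3,4) False by (simp add: A B on_curve_def)
  qed
qed

lemma ell_s_zero_at_tangency_O:
  assumes "Fc r s P = 0" "q \<noteq> 0"
    and "Fc r s (lc 1 (q, -q, 0) 1 P) = Fc r s (lc 1 (q, -q, 0) (-1) P)"
  shows "ell s P = 0"
proof -
  have "Fc r s (lc 1 (q, -q, 0) 1 P) - Fc r s (lc 1 (q, -q, 0) (-1) P) =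
      2*Fc r s P + 2*q^2*ell s P"
    by (cases P) (simp add: lc_def Fc_def ell_def algebra_simps power2_eq_square power3_eq_cube)
  with assms show ?thesis by simp
qed

lemma triangle_third_pt_through_O:
  assumes "r > 0" "s > 0" "third_pt r s P Q R" "triangle P" "is_O Q"
  shows "triangle R"
proof -
  have curve: "on_curve r s P" "on_curve r s Q" "on_curve r s R"
    using assms(3) unfolding third_pt_def by auto
  have "\<not> is_O P" using assms(4) not_triangle_if_is_O by blast
  obtain q where q: "q \<noteq> 0" "Q = (q, -q, 0)"
    using assms(5) by (cases Q) (auto simp: is_O_def)
  have "\<not> is_O R"
  proof
    assume "is_O R"
    then obtain w where "w \<noteq> 0" "R = (w, -w, 0)"
      by (cases R) (auto simp: is_O_def)
    then have "proj_eq Q R"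
      using q unfolding proj_eq_def by (intro conjI exI[of _ "w/q"]) auto
    then have "Fc r s (lc 1 Q 1 P) = Fc r s (lc 1 Q (-1) P)"
      by (rule third_pt_tangent_eq[OF assms(3)])
    then have "ell s P = 0"
      using ell_s_zero_at_tangency_O[of r s P q] curve(1) q by (simp add: on_curve_def)
    with ell_s_ne_zero[OF assms(1,2) curve(1) \<open>\<not> is_O P\<close>] show False ..
  qed
  have "det3 P Q R = -q * det3 P R O_pt"
    by (cases P; cases R) (simp add: q(2) det3_def O_pt_def algebra_simps)
  then have "det3 P R O_pt = 0"
    using third_pt_collinear[OF assms(3)] q(1) by simp
  then show ?thesis
    using triangle_iff_if_collinear_with_O[OF assms(1,2) curve(1,3) \<open>\<not> is_O P\<close> \<open>\<not> is_O R\<close>]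
      assms(4) by simp
qed

lemma ell_zero_at_tangency:
  assumes "c^2*(s - c) = 4*s*r^2" "c \<noteq> 0" "3*c \<noteq> 2*s" "Fc r s P = 0" "q \<noteq> 0"
    and "Fc r s (lc 1 (c/2*q, c/2*q, q) 1 P) = Fc r s (lc 1 (c/2*q, c/2*q, q) (-1) P)"
  shows "ell c P = 0"
proof -
  obtain x y z where P: "P = (x, y, z)" by (cases P)
  define a where "a = c/2"
  have "s*r^2 = a^2*(s - 2*a)"
    using assms(1) unfolding a_def by (simp add: power2_eq_square algebra_simps)
  then have coeff: "s*a^2 - 3*s*r^2 = -2*a*a*(s - 3*a)"
    by (simp add: algebra_simps power2_eq_square)
  have "Fc r s (lc 1 (a*q, a*q, q) 1 P) - Fc r s (lc 1 (a*q, a*q, q) (-1) P) =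
      2*Fc r s P + 2*q^2*(a*(s - 3*a)*(x + y) + (s*a^2 - 3*s*r^2)*z)"
    unfolding P by (simp add: lc_def Fc_def algebra_simps power2_eq_square power3_eq_cube)
  also have "\<dots> = 2*Fc r s P + 2*q^2*(a*(s - 3*a))*(x + y - 2*a*z)"
    unfolding coeff by (simp add: algebra_simps)
  finally have "q^2*(a*(s - 3*a))*(x + y - 2*a*z) = 0"
    using assms(4,6)[folded a_def] by simp
  moreover have "a*(s - 3*a) \<noteq> 0"
    using assms(2,3) unfolding a_def by auto
  ultimately have "x + y - 2*a*z = 0"
    using assms(5) by simp
  then show ?thesis
    unfolding P a_def ell_def by simp
qed

(* lc (ell c V) U (-ell c U) V is the point where the line through U and V meets ell c = 0. *)
lemma third_pt_ell_product:
  assumes "third_pt r s P Q R"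
  shows "\<exists>k U V. k \<noteq> 0 \<and>
    (\<forall>c. k*(ell c P * ell c Q * ell c R) = Fc r s (lc (ell c V) U (-ell c U) V))"
proof -
  obtain U V p1 p2 q1 q2 c1 c2 k where
    h: "P = lc p1 U p2 V" "Q = lc q1 U q2 V" "R = lc c1 U c2 V" "k \<noteq> 0" and
    factors: "\<forall>la mu. Fc r s (lc la U mu V) = k*(p2*la - p1*mu)*(q2*la - q1*mu)*(c2*la - c1*mu)"
    using assms unfolding third_pt_def by blast
  have "k*(ell c P * ell c Q * ell c R) = Fc r s (lc (ell c V) U (-ell c U) V)" for c
  proof -
    have "Fc r s (lc (ell c V) U (-ell c U) V) = k*(p2*ell c V + p1*ell c U)*
        (q2*ell c V + q1*ell c U)*(c2*ell c V + c1*ell c U)"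
      using factors by simp
    then show ?thesis
      unfolding h(1-3) ell_lc by (simp add: algebra_simps)
  qed
  with h(4) show ?thesis by blast
qed

lemma ell_product_nonneg:
  assumes "third_pt r s P Q R" "s > 0" "c < s" "c^2*(s - c) = 4*s*r^2"
  shows "(ell c P * ell s P) * (ell c Q * ell s Q) * (ell c R * ell s R) \<ge> 0"
proof -
  obtain k U V where "k \<noteq> 0" and
    k: "\<And>c. k*(ell c P * ell c Q * ell c R) = Fc r s (lc (ell c V) U (-ell c U) V)"
    using third_pt_ell_product[OF assms(1)] by blast
  define W where "W c = lc (ell c V) U (-ell c U) V" for c
  obtain x1 y1 z where W_c: "W c = (x1, y1, z)" by (cases "W c")
  obtain x2 y2 z' where W_s: "W s = (x2, y2, z')" by (cases "W s")
  have "ell d (W d) = 0" for d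
    unfolding W_def by (simp add: ell_lc)
  moreover have "z' = z"
    using W_c W_s unfolding W_def by (cases U; cases V) (simp add: lc_def ell_def algebra_simps)
  ultimately have c: "k*(ell c P * ell c Q * ell c R) = -(s - c)*z*(x1 - c*z/2)^2"
    and s: "k*(ell s P * ell s Q * ell s R) = -s*r^2*z^3"
    using k[of c] k[of s] Fc_on_tangent_line[OF _ assms(4)] Fc_on_ell_s_zero W_c W_s
    unfolding W_def[symmetric] by (metis, metis)
  have "(k*k)*((ell c P * ell s P) * (ell c Q * ell s Q) * (ell c R * ell s R)) =
      (k*(ell c P * ell c Q * ell c R))*(k*(ell s P * ell s Q * ell s R))"
    by (simp add: algebra_simps)
  also have "\<dots> = ((s - c)*s*r^2)*((z^2)^2*(x1 - c*z/2)^2)"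
    unfolding c s by (simp add: algebra_simps power2_eq_square power3_eq_cube)
  also have "\<dots> \<ge> 0"
    using assms(2,3) by simp
  finally have "(k*k)*((ell c P * ell s P) * (ell c Q * ell s Q) * (ell c R * ell s R)) \<ge> 0" .
  moreover have "k*k > 0"
    using \<open>k \<noteq> 0\<close> by (metis not_real_square_gt_zero)
  ultimately show ?thesis
    by (simp add: zero_le_mult_iff)
qed

lemma neg_iff_not_neg_if_mult_nonneg:
  fixes a b c :: real
  assumes "a < 0" "a*b*c \<ge> 0" "b \<noteq> 0" "c \<noteq> 0"
  shows "c < 0 \<longleftrightarrow> \<not> b < 0"
proof -
  have "a*(b*c) \<ge> 0" using assms(2) by (simp add: mult.assoc)
  with assms(1) have "b*c \<le> 0" by (simp add: zero_le_mult_iff)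
  with assms(3,4) have "b*c < 0" by (simp add: order_le_less)
  then show ?thesis by (auto simp: mult_less_0_iff)
qed

section \<open>The tangent lines through O\<close>

lemma quadratic_eq_zero_of_three_roots:
  fixes A B C x0 x1 x2 :: real
  assumes "A*x0^2 + B*x0 + C = 0" "A*x1^2 + B*x1 + C = 0" "A*x2^2 + B*x2 + C = 0"
    and "x0 \<noteq> x1" "x0 \<noteq> x2" "x1 \<noteq> x2"
  shows "A = 0 \<and> B = 0 \<and> C = 0"
proof -
  have "(x0 - x1) * (A*(x0 + x1) + B) = 0" "(x0 - x2) * (A*(x0 + x2) + B) = 0"
    using assms(1-3) by (simp_all add: algebra_simps power2_eq_square)
  then have 1: "A*(x0 + x1) + B = 0" and 2: "A*(x0 + x2) + B = 0"
    using assms(4,5) by simp_all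
  have "A * (x1 - x2) = (A*(x0 + x1) + B) - (A*(x0 + x2) + B)"
    by (simp add: algebra_simps)
  with 1 2 have "A * (x1 - x2) = 0" by simp
  with assms(6) have "A = 0" by simp
  with 1 assms(1) show ?thesis by simp
qed

lemma cubic_three_real_roots:
  fixes r s :: real
  assumes "r > 0" "s > 0" "s^2 > 27*r^2"
  shows "\<exists>u0 u1 u2. u0 < 0 \<and> 0 < u1 \<and> u1 < u2 \<and> u2 < s \<and>
     (\<forall>t. t^2*(s - t) - 4*s*r^2 = -((t - u0)*(t - u1)*(t - u2)))"
proof -
  define f where "f t = t^2*(s - t) - 4*s*r^2" for t :: real
  have cont: "continuous_on {a..b} f" for a b
    unfolding f_def by (intro continuous_intros)
  have f0: "f 0 < 0" and fs: "f s < 0"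
    using assms unfolding f_def by simp_all
  have fm: "f (2*s/3) > 0"
    using assms unfolding f_def by (simp add: power2_eq_square field_simps)
  have "r^2 < 3*s^2"
    using assms(3) zero_le_power2[of r] by linarith
  then have fn: "f (-2*s) > 0"
    using assms unfolding f_def by (simp add: power2_eq_square field_simps)
  obtain u0 where u0: "-2*s \<le> u0" "u0 \<le> 0" "f u0 = 0"
    using IVT2'[of f 0 0 "-2*s"] f0 fn cont assms by force
  obtain u1 where u1: "0 \<le> u1" "u1 \<le> 2*s/3" "f u1 = 0"
    using IVT'[of f 0 0 "2*s/3"] f0 fm cont assms by force
  obtain u2 where u2: "2*s/3 \<le> u2" "u2 \<le> s" "f u2 = 0"
    using IVT2'[of f s 0 "2*s/3"] fs fm cont assms by force
  have "u0 \<noteq> 0" "u1 \<noteq> 0" "u2 \<noteq> s"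
    using u0 u1 u2 f0 fs by auto
  moreover have "u1 \<noteq> 2*s/3" "u2 \<noteq> 2*s/3"
    using u1(3) u2(3) fm by (metis less_irrefl)+
  ultimately have order: "u0 < 0" "0 < u1" "u1 < u2" "u2 < s"
    using u0 u1 u2 by auto
  define A B C where "A = s - (u0 + u1 + u2)" and "B = u0*u1 + u0*u2 + u1*u2"
    and "C = -(4*s*r^2 + u0*u1*u2)"
  have remainder: "f t + (t - u0)*(t - u1)*(t - u2) = A*t^2 + B*t + C" for t
    unfolding f_def A_def B_def C_def
    by (simp add: algebra_simps power2_eq_square power3_eq_cube)
  have "A*u^2 + B*u + C = 0" if "u \<in> {u0, u1, u2}" for u
    using remainder[of u] that u0 u1 u2 by auto
  then have "A = 0 \<and> B = 0 \<and> C = 0"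
    using quadratic_eq_zero_of_three_roots[of A u0 B C u1 u2] order by simp
  then have "t^2*(s - t) - 4*s*r^2 = -((t - u0)*(t - u1)*(t - u2))" for t
    using remainder[of t] unfolding f_def by (simp add: algebra_simps)
  with order show ?thesis by blast
qed

locale tangent_slopes =
  fixes r s u0 u1 u2 :: real
  assumes r_pos: "r > 0" and s_pos: "s > 0" and s_large: "s^2 > 27*r^2"
    and slopes_order: "u0 < 0" "0 < u1" "u1 < u2" "u2 < s"
    and slopes_factor: "\<And>t. t^2*(s - t) - 4*s*r^2 = -((t - u0)*(t - u1)*(t - u2))"
begin

lemma tangent_slope_iff: "t^2*(s - t) = 4*s*r^2 \<longleftrightarrow> t = u0 \<or> t = u1 \<or> t = u2"
  using slopes_factor[of t] by auto

lemma slope_of_curve_point: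
  assumes "Fc r s (x, y, z) = 0" "z \<noteq> 0" "x + y = t*z"
  shows "t \<le> u0 \<or> (u1 \<le> t \<and> t \<le> u2) \<or> s < t"
proof -
  have xy: "x*y*(s - t) = s*r^2*z^2"
    using Fc_on_line_through_O[OF assms(3), of r s] assms(1,2) by simp
  have "s*r^2*z^2 > 0"
    using r_pos s_pos assms(2) by simp
  with xy have "t \<noteq> s" by auto
  moreover have "t \<le> u0 \<or> (u1 \<le> t \<and> t \<le> u2)" if "t < s"
  proof -
    have "4*(x*y) \<le> (x + y)^2"
      using zero_le_power2[of "x - y"] by (simp add: algebra_simps power2_eq_square)
    then have "4*(x*y)*(s - t) \<le> t^2*z^2*(s - t)"
      using that assms(3) by (simp add: power_mult_distrib mult_right_mono)
    then have "(4*s*r^2)*z^2 \<le> (t^2*(s - t))*z^2"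
      using xy by (simp add: algebra_simps)
    then have "(t - u0)*(t - u1)*(t - u2) \<le> 0"
      using slopes_factor[of t] assms(2) by simp
    then show ?thesis
      using slopes_order
      by (smt (verit, best) mult_neg_neg mult_pos_neg mult_pos_pos)
  qed
  ultimately show ?thesis by linarith
qed

lemma triangle_iff_ell_sign:
  assumes "c = u0 \<or> c = u1" "on_curve r s X" "\<not> is_O X" "ell c X \<noteq> 0"
  shows "ell c X * ell s X < 0 \<longleftrightarrow> triangle X"
proof -
  obtain x y z where X: "X = (x, y, z)" by (cases X)
  show ?thesis
  proof (cases "z = 0")
    case True
    then show ?thesis by (simp add: X ell_def triangle_def)
  next
    case False
    define t where "t = (x + y)/z"
    then have xy: "x + y = t*z" using False by simp
    have F: "Fc r s (x, y, z) = 0" using assms(2) by (simp add: X on_curve_def)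
    have "ell c X * ell s X = ((t - c)*(t - s))*z^2"
      using xy by (simp add: X ell_def algebra_simps power2_eq_square)
    then have "ell c X * ell s X < 0 \<longleftrightarrow> (t - c)*(t - s) < 0"
      using False by (simp add: mult_less_0_iff)
    also have "\<dots> \<longleftrightarrow> 0 < t \<and> t < s"
      using slope_of_curve_point[OF F False xy] assms(1,4) xy slopes_order
      by (auto simp: X ell_def mult_less_0_iff)
    also have "\<dots> \<longleftrightarrow> triangle X"
      using triangle_iff_slope[OF r_pos s_pos F False xy] by (simp add: X)
    finally show ?thesis .
  qed
qed

lemma tangency_point:
  assumes "c = u0 \<or> c = u1 \<or> c = u2" "on_curve r s X" "\<not> is_O X" "ell c X = 0"
  shows "\<exists>q. q \<noteq> 0 \<and> X = (c/2*q, c/2*q, q)"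
proof -
  obtain x y z where X: "X = (x, y, z)" by (cases X)
  have "c^2*(s - c) = 4*s*r^2" "s - c > 0"
    using assms(1) tangent_slope_iff slopes_order by auto
  then have "(s - c)*z*(x - c*z/2)^2 = 0"
    using Fc_on_tangent_line[of c x y z s r] assms(2,4) by (simp add: X on_curve_def)
  then have "z = 0 \<or> x = c*z/2"
    using \<open>s - c > 0\<close> by simp
  moreover have "z \<noteq> 0"
    using assms(2-4) by (auto simp: X on_curve_def is_O_def ell_def)
  ultimately show ?thesis
    using assms(4) by (intro exI[of _ z]) (auto simp: X ell_def)
qed

lemma diagonal_curve_point:
  assumes "on_curve r s (x, x, z)"
  shows "ell u0 (x, x, z) = 0 \<or> ell u1 (x, x, z) = 0 \<or> ell u2 (x, x, z) = 0"
proof -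
  have "z \<noteq> 0"
    using assms by (auto simp: on_curve_def Fc_def power2_eq_square power3_eq_cube)
  define t where "t = 2*x/z"
  then have x: "x = t*z/2" using \<open>z \<noteq> 0\<close> by simp
  have "4*Fc r s (x, x, z) = z^3*(t^2*(s - t) - 4*s*r^2)"
    unfolding x by (simp add: Fc_def algebra_simps power2_eq_square power3_eq_cube)
  then have "t^2*(s - t) = 4*s*r^2"
    using assms \<open>z \<noteq> 0\<close> by (simp add: on_curve_def)
  then show ?thesis
    unfolding tangent_slope_iff by (auto simp: ell_def x)
qed

lemma triangle_iff_pos_if_ell_zero:
  assumes "c = u0 \<or> c = u1 \<or> c = u2" "on_curve r s X" "\<not> is_O X" "ell c X = 0"
  shows "triangle X \<longleftrightarrow> c > 0"
  using tangency_point[OF assms] triangle_diagonal_iff[of _ "c/2"] by auto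

lemma third_pt_parity_off_tangency:
  assumes "third_pt r s P Q R" "triangle P" "\<not> is_O Q" "\<not> is_O R" "c = u0 \<or> c = u1"
    and "ell c P \<noteq> 0" "ell c Q \<noteq> 0" "ell c R \<noteq> 0"
  shows "triangle R \<longleftrightarrow> \<not> triangle Q"
proof -
  have curve: "on_curve r s P" "on_curve r s Q" "on_curve r s R"
    using assms(1) unfolding third_pt_def by auto
  have "\<not> is_O P" using assms(2) not_triangle_if_is_O by blast
  have "c < s" "c^2*(s - c) = 4*s*r^2"
    using assms(5) slopes_order tangent_slope_iff by auto
  then have "(ell c P * ell s P) * (ell c Q * ell s Q) * (ell c R * ell s R) \<ge> 0"
    using ell_product_nonneg[OF assms(1) s_pos] by blast
  moreover have "ell c P * ell s P < 0"
    using triangle_iff_ell_sign[OF assms(5) curve(1) \<open>\<not> is_O P\<close> assms(6)] assms(2) by simp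
  moreover have "ell c Q * ell s Q \<noteq> 0" "ell c R * ell s R \<noteq> 0"
    using assms(3,4,7,8) curve ell_s_ne_zero[OF r_pos s_pos] by simp_all
  ultimately have "ell c R * ell s R < 0 \<longleftrightarrow> \<not> ell c Q * ell s Q < 0"
    using neg_iff_not_neg_if_mult_nonneg by blast
  then show ?thesis
    using triangle_iff_ell_sign[OF assms(5)] curve assms(3,4,7,8) by simp
qed

(* R lies on the diagonal through the two tangency points; it is not the point of tangency for u0,
   since the tangent there is ell u0 = 0, which misses P. *)
lemma triangle_third_pt_of_tangency_points:
  assumes "third_pt r s P Q R" "\<not> is_O R"
    and "p \<noteq> 0" "P = (u1/2*p, u1/2*p, p)" "q \<noteq> 0" "Q = (u0/2*q, u0/2*q, q)"
  shows "triangle R"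
proof -
  have curve: "on_curve r s P" "on_curve r s R"
    using assms(1) unfolding third_pt_def by auto
  obtain c1 c2 c3 where R: "R = (c1, c2, c3)" by (cases R)
  have "(c1 - c2)*p*q*(u1/2 - u0/2) = 0"
    using third_pt_collinear[OF assms(1)] by (simp add: assms(4,6) R det3_def algebra_simps)
  then have "c2 = c1"
    using assms(3,5) slopes_order by simp
  then have "ell u0 R = 0 \<or> ell u1 R = 0 \<or> ell u2 R = 0"
    using diagonal_curve_point curve(2) R by blast
  moreover have "ell u0 R \<noteq> 0"
  proof
    assume "ell u0 R = 0"
    then obtain w where "w \<noteq> 0" "R = (u0/2*w, u0/2*w, w)"
      using tangency_point[of u0 R] curve(2) assms(2) by blast
    then have "proj_eq Q R"
      using assms(5,6) unfolding proj_eq_def by (intro conjI exI[of _ "w/q"]) auto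
    then have "Fc r s (lc 1 Q 1 P) = Fc r s (lc 1 Q (-1) P)"
      by (rule third_pt_tangent_eq[OF assms(1)])
    then have "ell u0 P = 0"
      using ell_zero_at_tangency[of u0 s r P q] curve(1) assms(5,6) slopes_order tangent_slope_iff
      by (simp add: on_curve_def)
    moreover have "ell u0 P = (u1 - u0)*p"
      by (simp add: assms(4) ell_def algebra_simps)
    ultimately show False
      using assms(3) slopes_order by simp
  qed
  ultimately show ?thesis
    using triangle_iff_pos_if_ell_zero[of u1 R] triangle_iff_pos_if_ell_zero[of u2 R]
      curve(2) assms(2) slopes_order by auto
qed

lemma triangle_third_pt_through_u0_tangency:
  assumes "third_pt r s P Q R" "triangle P" "\<not> is_O Q" "\<not> is_O R" "ell u0 Q = 0"
  shows "triangle R"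
proof -
  have curve: "on_curve r s P" "on_curve r s Q" "on_curve r s R"
    using assms(1) unfolding third_pt_def by auto
  have "\<not> is_O P" using assms(2) not_triangle_if_is_O by blast
  obtain q where q: "q \<noteq> 0" "Q = (u0/2*q, u0/2*q, q)"
    using tangency_point[of u0 Q] curve(2) assms(3,5) by blast
  have "ell u1 Q \<noteq> 0" "\<not> triangle Q"
    using q slopes_order triangle_diagonal_iff[of q "u0/2"] by (simp_all add: ell_def algebra_simps)
  consider "ell u1 P \<noteq> 0 \<and> ell u1 R \<noteq> 0" | "ell u1 R = 0" | "ell u1 P = 0"
    by blast
  then show ?thesis
  proof cases
    case 1
    then show ?thesis
      using third_pt_parity_off_tangency[OF assms(1-4), of u1] \<open>ell u1 Q \<noteq> 0\<close> \<open>\<not> triangle Q\<close>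
      by blast
  next
    case 2
    then show ?thesis
      using triangle_iff_pos_if_ell_zero[of u1 R] curve(3) assms(4) slopes_order by auto
  next
    case 3
    then obtain p where "p \<noteq> 0" "P = (u1/2*p, u1/2*p, p)"
      using tangency_point[of u1 P] curve(1) \<open>\<not> is_O P\<close> by blast
    then show ?thesis
      using triangle_third_pt_of_tangency_points[OF assms(1,4)] q by blast
  qed
qed

lemma third_pt_parity:
  assumes "third_pt r s P Q R" "triangle P" "\<not> is_O Q" "\<not> is_O R"
  shows "triangle R \<longleftrightarrow> \<not> triangle Q"
proof -
  have curve: "on_curve r s P" "on_curve r s Q" "on_curve r s R"
    using assms(1) unfolding third_pt_def by auto
  have "\<not> is_O P" using assms(2) not_triangle_if_is_O by blast
  then have "ell u0 P \<noteq> 0"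
    using triangle_iff_pos_if_ell_zero[of u0 P] curve(1) assms(2) slopes_order by auto
  consider "ell u0 Q \<noteq> 0 \<and> ell u0 R \<noteq> 0" | "ell u0 Q = 0" | "ell u0 R = 0"
    by blast
  then show ?thesis
  proof cases
    case 1
    then show ?thesis
      using third_pt_parity_off_tangency[OF assms, of u0] \<open>ell u0 P \<noteq> 0\<close> by blast
  next
    case 2
    then show ?thesis
      using triangle_third_pt_through_u0_tangency[OF assms] curve(2) assms(3)
        triangle_iff_pos_if_ell_zero[of u0 Q] slopes_order by auto
  next
    case 3
    then show ?thesis
      using triangle_third_pt_through_u0_tangency[OF third_pt_swap[OF assms(1)] assms(2,4,3)]
        curve(3) assms(4) triangle_iff_pos_if_ell_zero[of u0 R] slopes_order by auto
  qed
qed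

lemma third_pt_triangle_iff:
  assumes "third_pt r s P Q R" "triangle P"
  shows "triangle R \<longleftrightarrow> \<not> triangle Q"
proof (cases "is_O Q \<or> is_O R")
  case True
  then show ?thesis
    using triangle_third_pt_through_O[OF r_pos s_pos assms]
      triangle_third_pt_through_O[OF r_pos s_pos third_pt_swap[OF assms(1)] assms(2)]
      not_triangle_if_is_O by blast
next
  case False
  then show ?thesis using third_pt_parity[OF assms] by blast
qed

lemma triangle_cmult_iff_odd:
  assumes "on_curve r s P" "triangle P"
  shows "on_curve r s (cmult r s k P) \<and> (triangle (cmult r s k P) \<longleftrightarrow> odd k)"
proof (induction k)
  case 0
  show ?case by (simp add: O_pt_def on_curve_def Fc_def triangle_def)
next
  case (Suc k)
  define Q where "Q = cmult r s k P"
  define R where "R = (SOME R. third_pt r s P Q R)"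
  have "\<exists>R. third_pt r s P Q R"
    using third_pt_exists[OF r_pos s_pos s_large assms(1)] Suc.IH unfolding Q_def by blast
  then have "third_pt r s P Q R"
    unfolding R_def by (rule someI_ex)
  then have "on_curve r s R" "triangle R \<longleftrightarrow> \<not> triangle Q"
    using third_pt_triangle_iff[OF _ assms(2)] unfolding third_pt_def by blast+
  moreover have "cmult r s (Suc k) P = swap_xy R"
    unfolding R_def Q_def by (simp add: cadd_def)
  ultimately show ?case
    using Suc.IH unfolding Q_def by simp
qed

end

theorem corollary3:
  fixes r s x y :: real
  assumes "r > 0" and "s > 3 * sqrt 3 * r"
    and "on_curve r s (x, y, 1)" and "x > 0" and "y > 0"
  shows "\<not> (has_finite_order r s (x, y, 1) \<and> odd (point_order r s (x, y, 1)))"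
proof
  define P where "P = (x, y, 1::real)"
  assume "has_finite_order r s (x, y, 1) \<and> odd (point_order r s (x, y, 1))"
  then have finite: "\<exists>n>0. proj_eq (cmult r s n P) O_pt" and "odd (point_order r s P)"
    unfolding has_finite_order_def P_def by auto
  have "3 * sqrt 3 * r > 0" using assms(1) by simp
  then have "s > 0" and "(3 * sqrt 3 * r)^2 < s^2"
    using assms(2) by (linarith, intro power_strict_mono) auto
  then have "s > 0" "s^2 > 27*r^2"
    by (simp_all add: power_mult_distrib)
  then obtain u0 u1 u2 where slopes: "tangent_slopes r s u0 u1 u2"
    using cubic_three_real_roots[OF assms(1)] assms(1) unfolding tangent_slopes_def by metis
  have "on_curve r s P" "triangle P"
    using assms(3-5) by (simp_all add: P_def triangle_def)
  then have "triangle (cmult r s (point_order r s P) P)"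
    using tangent_slopes.triangle_cmult_iff_odd[OF slopes] \<open>odd (point_order r s P)\<close> by blast
  moreover have "proj_eq (cmult r s (point_order r s P) P) O_pt"
    using LeastI_ex[OF finite] unfolding point_order_def by blast
  ultimately show False
    using not_triangle_if_proj_eq_O by blast
qed

end
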